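(* Let $m/n\in(0,1/2)$ with $\mathrm{LFP}(m/n)=u/v$ and $\mathrm{RFP}(m/n)=p/q$. Then: (a) $\#\mathcal O_{m/n}[m,n-1]=q=n-v$ and $\#\mathcal O_{m/n}[m-1,0]=n-q=v$; (b) $\#(\mathcal O_{m/n}[m,n-1]\cap[1,m])=\#(\mathcal O_{m/n}[m,n-1]\cap[n-m,n-1])=p=m-u$; (c) $\#(\mathcal O_{m/n}[m-1,0]\cap[1,m])=\#(\mathcal O_{m/n}[m-1,0]\cap[n-m,n-1])=m-p=u$.
   Context: All rationals are written in lowest terms. The Farey sequence $\mathcal F_n$ of order $n$ is the increasing sequence of rationals in $[0,1/2]$ with denominator at most $n$. For $h/k\in(0,1/2)$, the left and right Farey parents $\mathrm{LFP}(h/k)$, $\mathrm{RFP}(h/k)$ are the elements of $\mathcal F_k$ immediately preceding and following $h/k$. Let $+_n$ denote addition modulo $n$ on $\mathbb Z_n=\{0,\dots,n-1\}$. For $r,s\in\mathbb Z_n$, $\mathcal O_{m/n}[r,s]=\{r+_njm\colon 0\le j\le k\}$ where $k\ge0$ is least with $r+_nkm=s$. For integers $r\le s$, $[r,s]=\{r,r+1,\dots,s\}$. *)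

theory Defs
  imports Main "HOL.Rat"
begin

definition farey :: "int \<Rightarrow> rat set" where
  "farey n = {x. 0 \<le> x \<and> x \<le> 1/2 \<and> snd (quotient_of x) \<le> n}"

definition LFP :: "rat \<Rightarrow> rat" where
  "LFP x = Max {y \<in> farey (snd (quotient_of x)). y < x}"

definition RFP :: "rat \<Rightarrow> rat" where
  "RFP x = Min {y \<in> farey (snd (quotient_of x)). x < y}"

definition orbit :: "nat \<Rightarrow> nat \<Rightarrow> nat \<Rightarrow> nat \<Rightarrow> nat set" where
  "orbit m n r s =
     (let k = (LEAST k. (r + k * m) mod n = s) in {(r + j * m) mod n | j. j \<le> k})"

end

theory Submission
  imports Defs "HOL-Number_Theory.Cong"
begin

text \<open>Choose \<open>0 < v < n\<close> with \<open>m v = n u + 1\<close> and put \<open>p = m - u\<close>, \<open>q = n - v\<close>, so that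
  \<open>n p - m q = 1\<close>. These unimodular relations make \<open>u/v\<close> and \<open>p/q\<close> the Farey neighbours of
  \<open>m/n\<close>: a fraction \<open>a/b\<close> strictly between \<open>u/v\<close> and \<open>m/n\<close> has
  \<open>b = v (m b - n a) + n (a v - b u) \<ge> v + n\<close>.
  On the orbit side, \<open>m + (q - 1) m \<equiv> -1\<close> and \<open>m - 1 + (v - 1) m \<equiv> 0\<close> modulo \<open>n\<close>, so the two
  orbits are arithmetic progressions with \<open>q\<close> and \<open>v\<close> terms. The residue of \<open>c + j m\<close> lies in
  \<open>[n - m, n - 1]\<close> exactly when adding the next \<open>m\<close> passes a multiple of \<open>n\<close>, so the first
  \<open>L\<close> terms hit that block \<open>\<lfloor>(c + L m) / n\<rfloor> - \<lfloor>c / n\<rfloor>\<close> times. The block \<open>[1, m]\<close> is the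
  block \<open>[n - m, n - 1]\<close> shifted by \<open>m + 1\<close>, so it is counted the same way after replacing
  \<open>c\<close> by \<open>c - m - 1\<close>; the unimodular relations then evaluate all these floors.\<close>

lemma inj_on_orbit_index:
  fixes m n r :: nat
  assumes "coprime m n"
  shows "inj_on (\<lambda>j. (r + j * m) mod n) {..<n}"
proof (rule inj_onI)
  fix i j assume "i \<in> {..<n}" "j \<in> {..<n}" "(r + i * m) mod n = (r + j * m) mod n"
  then have "[r + i * m = r + j * m] (mod n)" "i < n" "j < n"
    by (simp_all add: cong_def)
  then show "i = j"
    using cong_add_lcancel_nat cong_mult_rcancel_nat[OF assms] cong_less_modulus_unique_nat by blast
qed

lemma orbit_eq_image:
  fixes m n r s K :: nat
  assumes "coprime m n" "K < n" "(r + K * m) mod n = s"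
  shows "orbit m n r s = (\<lambda>j. (r + j * m) mod n) ` {..K}"
proof -
  have "(LEAST k. (r + k * m) mod n = s) = K"
  proof (rule Least_equality)
    fix k assume k: "(r + k * m) mod n = s"
    show "K \<le> k"
    proof (rule ccontr)
      assume "\<not> K \<le> k"
      then show False
        using inj_onD[OF inj_on_orbit_index[OF assms(1), of r], of k K] k assms(2,3) by auto
    qed
  qed (fact assms(3))
  then show ?thesis unfolding orbit_def Let_def by auto
qed

lemma card_orbit_inter:
  fixes m n r s K :: nat
  assumes "coprime m n" "K < n" "(r + K * m) mod n = s"
  shows "card (orbit m n r s \<inter> S) = card {j. j < Suc K \<and> (r + j * m) mod n \<in> S}"
proof -
  let ?f = "\<lambda>j. (r + j * m) mod n"
  have "orbit m n r s \<inter> S = ?f ` {j. j < Suc K \<and> ?f j \<in> S}"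
    using orbit_eq_image[OF assms] by auto
  moreover have "inj_on ?f {j. j < Suc K \<and> ?f j \<in> S}"
    by (rule inj_on_subset[OF inj_on_orbit_index[OF assms(1)]]) (use assms(2) in auto)
  ultimately show ?thesis by (simp add: card_image)
qed

lemma card_orbit:
  fixes m n r s K :: nat
  assumes "coprime m n" "K < n" "(r + K * m) mod n = s"
  shows "card (orbit m n r s) = Suc K"
  using card_orbit_inter[OF assms, of UNIV] by simp

lemma div_add_less_modulus:
  fixes x m n :: int
  assumes "0 \<le> m" "m < n"
  shows "(x + m) div n = x div n + (if n - m \<le> x mod n then 1 else 0)"
proof -
  have "0 < n" using assms by linarith
  then have r: "0 \<le> x mod n" "x mod n < n" by simp_all
  have "(x + m) div n = x div n + (x mod n + m) div n"
    using div_add1_eq[of x m n] assms by (simp add: div_pos_pos_trivial mod_pos_pos_trivial)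
  moreover have "(x mod n + m) div n = (if n - m \<le> x mod n then 1 else 0)"
  proof (cases "n - m \<le> x mod n")
    case True
    have "(x mod n + m - n) div n = 0"
      using True assms r by (intro div_pos_pos_trivial; linarith)
    then show ?thesis
      using True div_add_self2[where a = "x mod n + m - n" and b = n] \<open>0 < n\<close> by simp
  next
    case False
    have "(x mod n + m) div n = 0"
      using False assms r by (intro div_pos_pos_trivial; linarith)
    then show ?thesis using False by simp
  qed
  ultimately show ?thesis by simp
qed

lemma card_progression_high_block:
  fixes c m n :: int
  assumes "0 \<le> m" "m < n"
  shows "int (card {j. j < L \<and> n - m \<le> (c + int j * m) mod n}) = (c + int L * m) div n - c div n"
proof (induction L)
  case (Suc L)
  let ?P = "\<lambda>j. n - m \<le> (c + int j * m) mod n"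
  have "{j. j < Suc L \<and> ?P j} = {j. j < L \<and> ?P j} \<union> (if ?P L then {L} else {})"
    by (auto simp: less_Suc_eq)
  then have "int (card {j. j < Suc L \<and> ?P j}) = int (card {j. j < L \<and> ?P j}) + (if ?P L then 1 else 0)"
    by simp
  also have "\<dots> = (c + int (Suc L) * m) div n - c div n"
    using Suc div_add_less_modulus[OF assms, of "c + int L * m"] by (simp add: algebra_simps)
  finally show ?case .
qed simp

lemma low_block_iff_shifted_high_block:
  fixes x m n :: int
  assumes "0 \<le> x" "x < n" "0 \<le> m" "m < n"
  shows "(1 \<le> x \<and> x \<le> m) \<longleftrightarrow> n - m \<le> (x - 1 - m) mod n"
proof -
  have "(x - 1 - m) mod n = (if x \<le> m then x - 1 - m + n else x - 1 - m)"
  proof (cases "x \<le> m")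
    case True
    have "(x - 1 - m) mod n = (x - 1 - m + n) mod n" by simp
    also have "\<dots> = x - 1 - m + n" using True assms by (intro mod_pos_pos_trivial) auto
    finally show ?thesis using True by simp
  qed (use assms in \<open>simp add: mod_pos_pos_trivial\<close>)
  then show ?thesis using assms by auto
qed

lemma card_orbit_inter_high_block:
  fixes m n r s K :: nat
  assumes "coprime m n" "K < n" "(r + K * m) mod n = s" "m < n"
  shows "int (card (orbit m n r s \<inter> {n - m..n - 1}))
           = (int r + int (Suc K) * int m) div int n - int r div int n"
proof -
  have "x \<in> {n - m..n - 1} \<longleftrightarrow> int n - int m \<le> int x" if "x < n" for x
    using that assms(4) by auto
  then have "(r + j * m) mod n \<in> {n - m..n - 1} \<longleftrightarrow> int n - int m \<le> (int r + int j * int m) mod int n" for j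
    using assms(4) zmod_int[of "r + j * m" n] by simp
  then show ?thesis
    using card_orbit_inter[OF assms(1-3)] card_progression_high_block[where m = "int m" and n = "int n" and c = "int r" and L = "Suc K"] assms(4)
    by simp
qed

lemma card_orbit_inter_low_block:
  fixes m n r s K :: nat
  assumes "coprime m n" "K < n" "(r + K * m) mod n = s" "m < n"
  shows "int (card (orbit m n r s \<inter> {1..m}))
           = (int r - 1 - int m + int (Suc K) * int m) div int n - (int r - 1 - int m) div int n"
proof -
  have "(r + j * m) mod n \<in> {1..m}
          \<longleftrightarrow> int n - int m \<le> (int r - 1 - int m + int j * int m) mod int n" for j
  proof -
    let ?x = "int ((r + j * m) mod n)"
    have "(r + j * m) mod n \<in> {1..m} \<longleftrightarrow> 1 \<le> ?x \<and> ?x \<le> int m" by auto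
    also have "\<dots> \<longleftrightarrow> int n - int m \<le> (?x - 1 - int m) mod int n"
      using assms(4) by (intro low_block_iff_shifted_high_block) auto
    also have "\<dots> \<longleftrightarrow> int n - int m \<le> (int r - 1 - int m + int j * int m) mod int n"
      by (simp add: zmod_int mod_diff_left_eq algebra_simps)
    finally show ?thesis .
  qed
  then show ?thesis
    using card_orbit_inter[OF assms(1-3)] card_progression_high_block[where m = "int m" and n = "int n" and c = "int r - 1 - int m" and L = "Suc K"] assms(4)
    by simp
qed

lemma mult_minus_div:
  fixes a n k :: int
  assumes "0 < a" "a \<le> n"
  shows "(n * k - a) div n = k - 1"
proof -
  have "(n * k - a) div n = ((n - a) + (k - 1) * n) div n"
    by (simp add: algebra_simps)
  also have "\<dots> = (k - 1) + (n - a) div n"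
    using assms by (subst div_mult_self1) auto
  also have "(n - a) div n = 0"
    using assms by (intro div_pos_pos_trivial) auto
  finally show ?thesis by simp
qed

lemma obtain_inverse_mod:
  fixes m n :: nat
  assumes "coprime m n" "1 < n"
  obtains u v where "0 < v" "v < n" "m * v = n * u + 1"
proof -
  obtain x where "[m * x = 1] (mod n)" using cong_solve_coprime_nat[OF assms(1)] by auto
  define v where "v = x mod n"
  have "(m * v) mod n = 1"
    using \<open>[m * x = 1] (mod n)\<close> assms(2) unfolding v_def cong_def by (simp add: mod_mult_right_eq)
  then have uni: "m * v = n * (m * v div n) + 1"
    using div_mult_mod_eq[of "m * v" n] by (simp add: mult.commute)
  moreover have "v < n" using assms(2) unfolding v_def by simp
  moreover have "0 < v" using uni by (rule_tac ccontr) simp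
  ultimately show ?thesis using that by blast
qed

lemma card_orbit_from_m_to_last:
  fixes m n p q :: nat
  assumes "coprime m n" "0 < m" "m < n" and uni: "n * p = m * q + 1" and "q \<le> n"
  shows "card (orbit m n m (n - 1)) = q"
    and "card (orbit m n m (n - 1) \<inter> {1..m}) = p"
    and "card (orbit m n m (n - 1) \<inter> {n - m..n - 1}) = p"
proof -
  have "0 < q" using uni \<open>0 < m\<close> \<open>m < n\<close> by (cases q) auto
  obtain p' where "p = Suc p'" using uni by (cases p) auto
  define K where "K = q - 1"
  have K: "K < n" "Suc K = q" using \<open>0 < q\<close> \<open>q \<le> n\<close> unfolding K_def by auto
  have "m + K * m + 1 = n + n * p'" using uni K(2)[symmetric] \<open>p = Suc p'\<close> by (simp add: algebra_simps)
  then have "m + K * m = n * p' + (n - 1)" using \<open>m < n\<close> by arith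
  then have "(m + K * m) mod n = (n - 1) mod n" by (simp only: mod_mult_self4)
  then have last: "(m + K * m) mod n = n - 1" using \<open>m < n\<close> by simp
  show "card (orbit m n m (n - 1)) = q" using card_orbit[OF assms(1) K(1) last] K(2) by simp
  have int_uni: "int m * int q = int n * int p - 1" using arg_cong[OF uni, of int] by simp
  have "int m + int (Suc K) * int m = int n * int p + (int m - 1)"
    using int_uni K(2) by (simp add: algebra_simps)
  then have "int (card (orbit m n m (n - 1) \<inter> {n - m..n - 1}))
               = (int n * int p + (int m - 1)) div int n - int m div int n"
    using card_orbit_inter_high_block[OF assms(1) K(1) last \<open>m < n\<close>] by (simp only:)
  also have "\<dots> = int p" using \<open>0 < m\<close> \<open>m < n\<close> by (simp add: div_pos_pos_trivial)
  finally show "card (orbit m n m (n - 1) \<inter> {n - m..n - 1}) = p" by simp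
  have low_end: "int m - 1 - int m + int (Suc K) * int m = int n * int p - 2"
    and low_start: "int m - 1 - int m = int n * 0 - 1"
    using int_uni K(2) by (simp_all add: algebra_simps)
  have "int (card (orbit m n m (n - 1) \<inter> {1..m}))
          = (int n * int p - 2) div int n - (int n * 0 - 1) div int n"
    using card_orbit_inter_low_block[OF assms(1) K(1) last \<open>m < n\<close>] unfolding low_end unfolding low_start .
  also have "\<dots> = int p"
    using mult_minus_div[of 2 "int n" "int p"] mult_minus_div[of 1 "int n" 0] \<open>m < n\<close> \<open>0 < m\<close>
    by simp
  finally show "card (orbit m n m (n - 1) \<inter> {1..m}) = p" by simp
qed

lemma card_orbit_from_pred_to_zero:
  fixes m n u v :: nat
  assumes "coprime m n" "0 < m" "m < n" and uni: "m * v = n * u + 1" and "v \<le> n"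
  shows "card (orbit m n (m - 1) 0) = v"
    and "card (orbit m n (m - 1) 0 \<inter> {1..m}) = u"
    and "card (orbit m n (m - 1) 0 \<inter> {n - m..n - 1}) = u"
proof -
  obtain K where K: "v = Suc K" using uni by (cases v) auto
  then have "K < n" using \<open>v \<le> n\<close> by simp
  have "m - 1 + K * m = n * u" using uni K \<open>0 < m\<close> by (simp add: algebra_simps)
  then have last: "(m - 1 + K * m) mod n = 0" by simp
  show "card (orbit m n (m - 1) 0) = v" using card_orbit[OF assms(1) \<open>K < n\<close> last] K by simp
  have int_uni: "int m * int v = int n * int u + 1" using arg_cong[OF uni, of int] by simp
  have "int (m - 1) + int (Suc K) * int m = int n * int u + int m"
    using int_uni K \<open>0 < m\<close> by (simp add: algebra_simps of_nat_diff)
  then have "int (card (orbit m n (m - 1) 0 \<inter> {n - m..n - 1}))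
               = (int n * int u + int m) div int n - int (m - 1) div int n"
    using card_orbit_inter_high_block[OF assms(1) \<open>K < n\<close> last \<open>m < n\<close>] by (simp only:)
  also have "\<dots> = int u" using \<open>m < n\<close> by (simp add: div_pos_pos_trivial)
  finally show "card (orbit m n (m - 1) 0 \<inter> {n - m..n - 1}) = u" by simp
  have low_end: "int (m - 1) - 1 - int m + int (Suc K) * int m = int n * int u - 1"
    and low_start: "int (m - 1) - 1 - int m = int n * 0 - 2"
    using int_uni K \<open>0 < m\<close> by (simp_all add: algebra_simps of_nat_diff)
  have "int (card (orbit m n (m - 1) 0 \<inter> {1..m}))
          = (int n * int u - 1) div int n - (int n * 0 - 2) div int n"
    using card_orbit_inter_low_block[OF assms(1) \<open>K < n\<close> last \<open>m < n\<close>] unfolding low_end unfolding low_start .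
  also have "\<dots> = int u"
    using mult_minus_div[of 1 "int n" "int u"] mult_minus_div[of 2 "int n" 0] \<open>m < n\<close> \<open>0 < m\<close>
    by simp
  finally show "card (orbit m n (m - 1) 0 \<inter> {1..m}) = u" by simp
qed

lemma unimodular_between_denom:
  fixes a b u v m n :: int
  assumes "m * v - n * u = 1" "0 \<le> v" "0 \<le> n" "u * b < a * v" "a * n < m * b"
  shows "v + n \<le> b"
proof -
  have "v * (m * b - a * n) + n * (a * v - u * b) = b * (m * v - n * u)"
    by (simp add: algebra_simps)
  then have "v * (m * b - a * n) + n * (a * v - u * b) = b"
    using assms(1) by simp
  moreover have "1 \<le> m * b - a * n" "1 \<le> a * v - u * b"
    using assms(4,5) by linarith+
  then have "v * 1 \<le> v * (m * b - a * n)" "n * 1 \<le> n * (a * v - u * b)"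
    using assms(2,3) by (simp_all only: mult_left_mono)
  ultimately show ?thesis by linarith
qed

lemma of_int_frac_less_iff:
  fixes a b c d :: int
  assumes "0 < b" "0 < d"
  shows "(of_int a / of_int b < (of_int c / of_int d :: rat)) \<longleftrightarrow> a * d < c * b"
  using assms by (simp add: field_simps flip: of_int_mult)

lemma farey_between_denom:
  fixes u v m n :: int
  assumes "m * v - n * u = 1" "0 < v" "0 < n" "quotient_of z = (a, b)"
    and "of_int u / of_int v < z" "z < of_int m / of_int n"
  shows "v + n \<le> b"
proof (rule unimodular_between_denom[OF assms(1)])
  have "0 < b" "z = of_int a / of_int b"
    using quotient_of_denom_pos[OF assms(4)] quotient_of_div[OF assms(4)] by simp_all
  then show "u * b < a * v" "a * n < m * b"
    using assms(2,3,5,6) by (simp_all add: of_int_frac_less_iff)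
qed (use assms in auto)

lemma quotient_of_of_int_div:
  "0 < b \<Longrightarrow> coprime a b \<Longrightarrow> quotient_of (of_int a / of_int b) = (a, b)"
  by (metis Fract_of_int_quotient quotient_of_Fract normalize_stable)

lemma unimodular_imp_coprime:
  fixes a b x y :: int
  assumes "x * a - y * b = 1"
  shows "coprime a b"
  using assms by (metis coprime_commute diff_eq_diff_eq coprime_mult_left_iff
      cancel_ab_semigroup_add_class.diff_right_commute coprime_doff_one_right)

lemma mem_farey_iff:
  assumes "quotient_of y = (a, b)"
  shows "y \<in> farey n \<longleftrightarrow> 0 \<le> a \<and> 2 * a \<le> b \<and> b \<le> n"
proof -
  have "0 < b" and y: "y = of_int a / of_int b"
    using quotient_of_denom_pos[OF assms] quotient_of_div[OF assms] by simp_all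
  have "0 \<le> y \<longleftrightarrow> 0 \<le> a"
    unfolding y using \<open>0 < b\<close> by (simp add: zero_le_divide_iff)
  moreover have "y \<le> 1/2 \<longleftrightarrow> 2 * a \<le> b"
    unfolding y using \<open>0 < b\<close> by (simp add: field_simps) (metis of_int_le_iff of_int_mult of_int_numeral)
  ultimately show ?thesis using assms unfolding farey_def by auto
qed

lemma finite_farey: "finite (farey n)"
proof (rule finite_subset)
  show "farey n \<subseteq> (\<lambda>(a, b). of_int a / of_int b) ` ({0..n} \<times> {0..n})"
  proof
    fix y assume "y \<in> farey n"
    moreover obtain a b where ab: "quotient_of y = (a, b)" by fastforce
    ultimately show "y \<in> (\<lambda>(a, b). of_int a / of_int b) ` ({0..n} \<times> {0..n})"
      using mem_farey_iff[OF ab] quotient_of_div[OF ab] by (auto intro!: image_eqI[of _ _ "(a, b)"])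
  qed
qed simp

lemma quotient_of_LFP:
  fixes m n u v :: int
  assumes uni: "m * v - n * u = 1" and "0 < v" "v \<le> n" "0 < m" "2 * m < n"
  shows "quotient_of (LFP (of_int m / of_int n)) = (u, v)"
proof -
  let ?x = "of_int m / of_int n :: rat" and ?y = "of_int u / of_int v :: rat"
  have "0 < n" using \<open>0 < v\<close> \<open>v \<le> n\<close> by linarith
  have "coprime m n" "coprime u v"
    using unimodular_imp_coprime[of v m u n] unimodular_imp_coprime[of "-n" u "-m" v] uni
    by (simp_all add: algebra_simps)
  then have qx: "quotient_of ?x = (m, n)" and qy: "quotient_of ?y = (u, v)"
    using \<open>0 < n\<close> \<open>0 < v\<close> by (simp_all add: quotient_of_of_int_div)
  have "0 < m * v" using \<open>0 < m\<close> \<open>0 < v\<close> by simp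
  then have "0 \<le> n * u" using uni by linarith
  then have "0 \<le> u" using \<open>0 < n\<close> by (simp add: zero_le_mult_iff)
  have "2 * m * v < n * v" using \<open>2 * m < n\<close> \<open>0 < v\<close> by (rule mult_strict_right_mono)
  then have "n * (2 * u) < n * v" using uni by linarith
  then have "2 * u \<le> v" using \<open>0 < n\<close> by simp
  have y_farey: "?y \<in> farey n" using mem_farey_iff[OF qy] \<open>0 \<le> u\<close> \<open>2 * u \<le> v\<close> assms by simp
  have "u * n < m * v" using uni by (simp add: mult.commute)
  then have y_less: "?y < ?x" using \<open>0 < v\<close> \<open>0 < n\<close> by (simp add: of_int_frac_less_iff)
  have "LFP ?x = ?y"
    unfolding LFP_def qx snd_conv
  proof (rule Max_eqI)
    fix z assume "z \<in> {z \<in> farey n. z < ?x}"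
    then have "z \<in> farey n" "z < ?x" by simp_all
    obtain a b where ab: "quotient_of z = (a, b)" by fastforce
    show "z \<le> ?y"
    proof (rule ccontr)
      assume "\<not> z \<le> ?y"
      then have "v + n \<le> b"
        using farey_between_denom[OF uni \<open>0 < v\<close> \<open>0 < n\<close> ab] \<open>z < ?x\<close> by simp
      moreover have "b \<le> n" using \<open>z \<in> farey n\<close> mem_farey_iff[OF ab] by simp
      ultimately show False using \<open>0 < v\<close> by linarith
    qed
  qed (use finite_farey y_farey y_less in auto)
  then show ?thesis using qy by simp
qed

lemma quotient_of_RFP:
  fixes m n p q :: int
  assumes uni: "n * p - m * q = 1" and "0 < q" "q \<le> n" "0 < m" "2 * m < n"
  shows "quotient_of (RFP (of_int m / of_int n)) = (p, q)"
proof -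
  let ?x = "of_int m / of_int n :: rat" and ?y = "of_int p / of_int q :: rat"
  have "0 < n" using \<open>0 < q\<close> \<open>q \<le> n\<close> by linarith
  have uni': "p * n - q * m = 1" using uni by (simp add: mult.commute)
  have "coprime m n" "coprime p q"
    using unimodular_imp_coprime[of "-q" m "-p" n] unimodular_imp_coprime[of n p m q] uni
    by (simp_all add: algebra_simps)
  then have qx: "quotient_of ?x = (m, n)" and qy: "quotient_of ?y = (p, q)"
    using \<open>0 < n\<close> \<open>0 < q\<close> by (simp_all add: quotient_of_of_int_div)
  have "0 < m * q" using \<open>0 < m\<close> \<open>0 < q\<close> by simp
  then have "0 < n * p" using uni by linarith
  then have "0 \<le> p" using \<open>0 < n\<close> by (simp add: zero_less_mult_iff)
  have "2 * p \<le> q"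
    \<comment> \<open>otherwise \<open>1/2\<close> lies strictly between \<open>m/n\<close> and \<open>p/q\<close>, so its denominator is at least \<open>n + q\<close>\<close>
  proof (rule ccontr)
    assume "\<not> 2 * p \<le> q"
    then have "n + q \<le> 2"
      using unimodular_between_denom[OF uni', of 2 1] \<open>2 * m < n\<close> \<open>0 < n\<close> \<open>0 < q\<close> by simp
    then show False using \<open>0 < m\<close> \<open>2 * m < n\<close> \<open>0 < q\<close> by linarith
  qed
  have y_farey: "?y \<in> farey n" using mem_farey_iff[OF qy] \<open>0 \<le> p\<close> \<open>2 * p \<le> q\<close> assms by simp
  have "m * q < p * n" using uni by (simp add: mult.commute)
  then have y_greater: "?x < ?y" using \<open>0 < q\<close> \<open>0 < n\<close> by (simp add: of_int_frac_less_iff)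
  have "RFP ?x = ?y"
    unfolding RFP_def qx snd_conv
  proof (rule Min_eqI)
    fix z assume "z \<in> {z \<in> farey n. ?x < z}"
    then have "z \<in> farey n" "?x < z" by simp_all
    obtain a b where ab: "quotient_of z = (a, b)" by fastforce
    show "?y \<le> z"
    proof (rule ccontr)
      assume "\<not> ?y \<le> z"
      then have "n + q \<le> b"
        using farey_between_denom[OF uni' \<open>0 < n\<close> \<open>0 < q\<close> ab] \<open>?x < z\<close> by simp
      moreover have "b \<le> n" using \<open>z \<in> farey n\<close> mem_farey_iff[OF ab] by simp
      ultimately show False using \<open>0 < q\<close> by linarith
    qed
  qed (use finite_farey y_farey y_greater in auto)
  then show ?thesis using qy by simp
qed

theorem lemma1p11:
  fixes m n :: nat and u v p q :: int
  assumes "coprime m n" and "0 < m" and "2 * m < n"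
    and "quotient_of (LFP (of_nat m / of_nat n)) = (u, v)"
    and "quotient_of (RFP (of_nat m / of_nat n)) = (p, q)"
  shows "int (card (orbit m n m (n - 1))) = q \<and> q = int n - v
       \<and> int (card (orbit m n (m - 1) 0)) = int n - q \<and> int n - q = v
       \<and> int (card (orbit m n m (n - 1) \<inter> {1..m})) = p
       \<and> int (card (orbit m n m (n - 1) \<inter> {n - m..n - 1})) = p
       \<and> p = int m - u
       \<and> int (card (orbit m n (m - 1) 0 \<inter> {1..m})) = int m - p
       \<and> int (card (orbit m n (m - 1) 0 \<inter> {n - m..n - 1})) = int m - p
       \<and> int m - p = u"
proof -
  have "m < n" "1 < n" using assms(2,3) by linarith+
  show ?thesis
  proof (rule obtain_inverse_mod[OF assms(1) \<open>1 < n\<close>])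
    fix u0 v0 assume "0 < v0" "v0 < n" and left: "m * v0 = n * u0 + 1"
    have "n * u0 < m * n" using left mult_less_mono2[OF \<open>v0 < n\<close> \<open>0 < m\<close>] by linarith
    then have "u0 < m" by (simp add: mult.commute[of m])
    have int_left: "int m * int v0 - int n * int u0 = 1" using arg_cong[OF left, of int] by simp
    then have int_right: "int n * int (m - u0) - int m * int (n - v0) = 1"
      using \<open>u0 < m\<close> \<open>v0 < n\<close> by (simp add: of_nat_diff algebra_simps)
    then have "int (n * (m - u0)) = int (m * (n - v0) + 1)" by simp
    then have right: "n * (m - u0) = m * (n - v0) + 1" by (simp only: of_nat_eq_iff)
    have uv: "u = int u0" "v = int v0"
      using quotient_of_LFP[OF int_left] assms(2-4) \<open>0 < v0\<close> \<open>v0 < n\<close> by auto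
    have pq: "p = int m - int u0" "q = int n - int v0"
      using quotient_of_RFP[OF int_right] assms(2,3,5) \<open>0 < v0\<close> \<open>v0 < n\<close> \<open>u0 < m\<close>
      by (auto simp: of_nat_diff)
    show ?thesis
      using card_orbit_from_m_to_last[OF assms(1,2) \<open>m < n\<close> right]
        card_orbit_from_pred_to_zero[OF assms(1,2) \<open>m < n\<close> left] \<open>v0 < n\<close> \<open>u0 < m\<close>
      unfolding uv pq by (simp add: of_nat_diff)
  qed
qed

end
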